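(* Let $G$ be a finite simple graph containing no induced banner and no induced odd hole. Then at least one of the following holds: (i) $G$ is perfect; (ii) $\alpha(G) \leq 2$; (iii) every odd antihole $A$ of $G$ is contained in a homogeneous set $H$ of $G$ such that $G[H]$ contains no co-triangle.
   Context: A hole is a chordless (induced) cycle with at least four vertices; it is odd if it has an odd number of vertices. An antihole is the complement of a hole; an odd antihole is the complement of an odd hole. A banner is the graph consisting of a hole on four vertices together with one additional vertex adjacent to exactly one vertex of that hole. A graph $G$ is perfect if $\chi(F) = \omega(F)$ for every induced subgraph $F$ of $G$, where $\chi$ is the chromatic number and $\omega$ the clique number. $\alpha(G)$ is the maximum size of a stable set. A co-triangle is a set of three pairwise non-adjacent vertices. A set $H \subseteq V(G)$ is homogeneous if $2 \leq |H| < |V(G)|$ and every vertex of $V(G)\setminus H$ is adjacent either to all of $H$ or to none of $H$; $G[H]$ is the induced subgraph on $H$. *)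

theory Defs
  imports Main
begin

definition simple_graph :: "'a set \<Rightarrow> ('a \<Rightarrow> 'a \<Rightarrow> bool) \<Rightarrow> bool" where
  "simple_graph V E \<longleftrightarrow> finite V \<and> (\<forall>x y. E x y \<longrightarrow> x \<in> V \<and> y \<in> V)
     \<and> (\<forall>x y. E x y \<longrightarrow> E y x) \<and> (\<forall>x. \<not> E x x)"

definition is_hole :: "'a set \<Rightarrow> ('a \<Rightarrow> 'a \<Rightarrow> bool) \<Rightarrow> 'a set \<Rightarrow> bool" where
  "is_hole V E S \<longleftrightarrow> S \<subseteq> V \<and> (\<exists>f k. k \<ge> 4 \<and> bij_betw f {..<k} S \<and>
     (\<forall>i<k. \<forall>j<k. E (f i) (f j) \<longleftrightarrow> (j = Suc i mod k \<or> i = Suc j mod k)))"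

definition is_antihole :: "'a set \<Rightarrow> ('a \<Rightarrow> 'a \<Rightarrow> bool) \<Rightarrow> 'a set \<Rightarrow> bool" where
  "is_antihole V E S \<longleftrightarrow> S \<subseteq> V \<and> (\<exists>f k. k \<ge> 4 \<and> bij_betw f {..<k} S \<and>
     (\<forall>i<k. \<forall>j<k. i \<noteq> j \<longrightarrow> (\<not> E (f i) (f j) \<longleftrightarrow> (j = Suc i mod k \<or> i = Suc j mod k))))"

definition is_odd_hole :: "'a set \<Rightarrow> ('a \<Rightarrow> 'a \<Rightarrow> bool) \<Rightarrow> 'a set \<Rightarrow> bool" where
  "is_odd_hole V E S \<longleftrightarrow> is_hole V E S \<and> odd (card S)"

definition is_odd_antihole :: "'a set \<Rightarrow> ('a \<Rightarrow> 'a \<Rightarrow> bool) \<Rightarrow> 'a set \<Rightarrow> bool" where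
  "is_odd_antihole V E S \<longleftrightarrow> is_antihole V E S \<and> odd (card S)"

definition has_induced_banner :: "'a set \<Rightarrow> ('a \<Rightarrow> 'a \<Rightarrow> bool) \<Rightarrow> bool" where
  "has_induced_banner V E \<longleftrightarrow> (\<exists>a\<in>V. \<exists>b\<in>V. \<exists>c\<in>V. \<exists>d\<in>V. \<exists>e\<in>V.
     distinct [a, b, c, d, e] \<and>
     E a b \<and> E b c \<and> E c d \<and> E d a \<and> \<not> E a c \<and> \<not> E b d \<and>
     E e a \<and> \<not> E e b \<and> \<not> E e c \<and> \<not> E e d)"

definition is_clique :: "('a \<Rightarrow> 'a \<Rightarrow> bool) \<Rightarrow> 'a set \<Rightarrow> bool" where
  "is_clique E K \<longleftrightarrow> (\<forall>x\<in>K. \<forall>y\<in>K. x \<noteq> y \<longrightarrow> E x y)"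

definition is_stable :: "('a \<Rightarrow> 'a \<Rightarrow> bool) \<Rightarrow> 'a set \<Rightarrow> bool" where
  "is_stable E S \<longleftrightarrow> (\<forall>x\<in>S. \<forall>y\<in>S. \<not> E x y)"

definition clique_number :: "'a set \<Rightarrow> ('a \<Rightarrow> 'a \<Rightarrow> bool) \<Rightarrow> nat" where
  "clique_number U E = Max {card K | K. K \<subseteq> U \<and> is_clique E K}"

definition stability_number :: "'a set \<Rightarrow> ('a \<Rightarrow> 'a \<Rightarrow> bool) \<Rightarrow> nat" where
  "stability_number U E = Max {card S | S. S \<subseteq> U \<and> is_stable E S}"

definition chromatic_number :: "'a set \<Rightarrow> ('a \<Rightarrow> 'a \<Rightarrow> bool) \<Rightarrow> nat" where
  "chromatic_number U E = (LEAST k. \<exists>c :: 'a \<Rightarrow> nat.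
     (\<forall>v\<in>U. c v < k) \<and> (\<forall>x\<in>U. \<forall>y\<in>U. E x y \<longrightarrow> c x \<noteq> c y))"

definition perfect :: "'a set \<Rightarrow> ('a \<Rightarrow> 'a \<Rightarrow> bool) \<Rightarrow> bool" where
  "perfect V E \<longleftrightarrow> (\<forall>U \<subseteq> V. chromatic_number U E = clique_number U E)"

definition homogeneous :: "'a set \<Rightarrow> ('a \<Rightarrow> 'a \<Rightarrow> bool) \<Rightarrow> 'a set \<Rightarrow> bool" where
  "homogeneous V E H \<longleftrightarrow> H \<subseteq> V \<and> 2 \<le> card H \<and> card H < card V \<and>
     (\<forall>v \<in> V - H. (\<forall>h\<in>H. E v h) \<or> (\<forall>h\<in>H. \<not> E v h))"

definition has_cotriangle :: "('a \<Rightarrow> 'a \<Rightarrow> bool) \<Rightarrow> 'a set \<Rightarrow> bool" where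
  "has_cotriangle E S \<longleftrightarrow> (\<exists>x\<in>S. \<exists>y\<in>S. \<exists>z\<in>S. distinct [x, y, z] \<and>
     \<not> E x y \<and> \<not> E y z \<and> \<not> E x z)"

end

theory Submission
  imports Defs
begin

text \<open>
  Write the odd antihole as \<open>a i\<close>, \<open>i \<in> \<int>\<close> read modulo \<open>k = |A|\<close>, so that \<open>a i\<close> misses
  exactly \<open>a (i - 1)\<close> and \<open>a (i + 1)\<close>; as \<open>C\<^sub>5\<close> is self-complementary, \<open>k \<ge> 7\<close>.
  Banner-freeness and the absence of an induced \<open>C\<^sub>5\<close> force every vertex \<open>x \<notin> A\<close> with a
  neighbour in \<open>A\<close> to see \<open>a (i + 1)\<close> whenever it misses \<open>a i\<close>; two nonadjacent such
  vertices have no common non-neighbour in \<open>A\<close>, and a stable triple of them is complete to \<open>A\<close>.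
  Grow \<open>H\<close> from \<open>A\<close> by repeatedly adding vertices that have a neighbour in \<open>A\<close> and a
  non-neighbour in \<open>H\<close>. A vertex outside \<open>H\<close> is then complete to \<open>H\<close> if it has a neighbour
  in \<open>A\<close>, and anticomplete to \<open>H\<close> otherwise. A co-triangle of \<open>H\<close> meeting the earliest possible
  level yields a banner, so \<open>H\<close> has none; if \<open>\<alpha>(G) \<ge> 3\<close> this makes \<open>H\<close> a proper subset of \<open>V\<close>.
\<close>

lemma no_induced_banner:
  assumes "\<not> has_induced_banner V E" "a \<in> V" "b \<in> V" "c \<in> V" "d \<in> V" "e \<in> V"
    "distinct [a, b, c, d, e]" "E a b" "E b c" "E c d" "E d a" "\<not> E a c" "\<not> E b d"
    "E e a" "\<not> E e b" "\<not> E e c" "\<not> E e d"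
  shows False
  using assms unfolding has_induced_banner_def by blast

lemma induced_C5_is_odd_hole:
  assumes graph: "simple_graph V E"
    and V: "v0 \<in> V" "v1 \<in> V" "v2 \<in> V" "v3 \<in> V" "v4 \<in> V"
    and distinct: "distinct [v0, v1, v2, v3, v4]"
    and edges: "E v0 v1" "E v1 v2" "E v2 v3" "E v3 v4" "E v4 v0"
    and non_edges: "\<not> E v0 v2" "\<not> E v0 v3" "\<not> E v1 v3" "\<not> E v1 v4" "\<not> E v2 v4"
  shows "is_odd_hole V E {v0, v1, v2, v3, v4}"
proof -
  have sym: "\<And>x y. E x y \<Longrightarrow> E y x" and irrefl: "\<And>x. \<not> E x x"
    using graph unfolding simple_graph_def by blast+
  let ?l = "[v0, v1, v2, v3, v4]"
  have bij: "bij_betw ((!) ?l) {..<5} (set ?l)"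
    by (rule bij_betw_nth) (use distinct in auto)
  have adj: "E (?l ! i) (?l ! j) \<longleftrightarrow> (j = Suc i mod 5 \<or> i = Suc j mod 5)"
    if "i < 5" "j < 5" for i j
  proof -
    have "i = 0 \<or> i = 1 \<or> i = 2 \<or> i = 3 \<or> i = 4" "j = 0 \<or> j = 1 \<or> j = 2 \<or> j = 3 \<or> j = 4"
      using that by arith+
    then show ?thesis
      using edges non_edges edges[THEN sym] non_edges[THEN contrapos_nn, OF sym] irrefl
      by (elim disjE) simp_all
  qed
  have "set ?l \<subseteq> V" using V by simp
  then have "is_hole V E (set ?l)"
    unfolding is_hole_def using bij adj by (intro conjI exI[of _ "(!) ?l"] exI[of _ 5]) simp_all
  moreover have "card (set ?l) = 5" using distinct_card[OF distinct] by simp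
  ultimately show ?thesis unfolding is_odd_hole_def by simp
qed

lemma odd_antihole_card_ge_7:
  assumes graph: "simple_graph V E" and odd_hole_free: "\<not> (\<exists>S. is_odd_hole V E S)"
    and antihole: "is_odd_antihole V E A"
  shows "7 \<le> card A"
proof -
  obtain f k where A: "A \<subseteq> V" and "4 \<le> k" and bij: "bij_betw f {..<k} A"
    and nonadj: "\<forall>i<k. \<forall>j<k. i \<noteq> j \<longrightarrow> (\<not> E (f i) (f j) \<longleftrightarrow> (j = Suc i mod k \<or> i = Suc j mod k))"
    and "odd (card A)"
    using antihole unfolding is_odd_antihole_def is_antihole_def by blast
  moreover have card: "card A = k" using bij_betw_same_card[OF bij] by simp
  moreover have "k \<noteq> 5"
  proof
    assume k: "k = 5"
    have V: "f i \<in> V" if "i < 5" for i using bij_betw_apply[OF bij] that A k by auto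
    have ne: "f i \<noteq> f j" if "i < 5" "j < 5" "i \<noteq> j" for i j
      using bij that k unfolding bij_betw_def inj_on_def by blast
    have adj: "E (f i) (f j) \<longleftrightarrow> \<not> (j = Suc i mod 5 \<or> i = Suc j mod 5)"
      if "i < 5" "j < 5" "i \<noteq> j" for i j
      using nonadj that k by blast
    \<comment> \<open>the complement of \<open>C\<^sub>5\<close> is the cycle \<open>f 0, f 2, f 4, f 1, f 3\<close>\<close>
    have "is_odd_hole V E {f 0, f 2, f 4, f 1, f 3}"
      by (rule induced_C5_is_odd_hole[OF graph])
        (use V ne[of 0 2] ne[of 0 4] ne[of 0 1] ne[of 0 3] ne[of 2 4] ne[of 2 1] ne[of 2 3]
          ne[of 4 1] ne[of 4 3] ne[of 1 3] adj[of 0 2] adj[of 2 4] adj[of 4 1] adj[of 1 3]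
          adj[of 3 0] adj[of 0 4] adj[of 0 1] adj[of 2 1] adj[of 2 3] adj[of 4 3] in simp_all)
    then show False using odd_hole_free by blast
  qed
  ultimately show ?thesis by presburger
qed

lemma iterate_int_step:
  assumes "P i" and "\<And>j. P j \<Longrightarrow> P (j + c)"
  shows "P (i + c * int m)"
proof (induction m)
  case (Suc m)
  then have "P (i + c * int m + c)" using assms(2) by blast
  then show ?case by (simp add: algebra_simps)
qed (use assms(1) in simp)

lemma int_step_one_reaches_residue:
  fixes k :: int
  assumes "0 < k" and "P i" and "\<And>j. P j \<Longrightarrow> P (j + 1)"
  shows "\<exists>j. j mod k = l mod k \<and> P j"
proof -
  have "P (i + 1 * ((l - i) mod k))"
    using iterate_int_step[of P i 1 "nat ((l - i) mod k)"] assms by simp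
  moreover have "(i + (l - i) mod k) mod k = l mod k" by (simp add: mod_add_right_eq)
  ultimately show ?thesis by auto
qed

lemma int_step_two_reaches_residue:
  fixes k :: int
  assumes "0 < k" "odd k" and "P i" and step: "\<And>j. P j \<Longrightarrow> P (j + 2)"
  shows "\<exists>j. j mod k = l mod k \<and> P j"
proof -
  define Q where "Q j \<longleftrightarrow> (\<exists>j'. j' mod k = j mod k \<and> P j')" for j
  have "Q (j + 1)" if "Q j" for j
  proof -
    obtain j' where j': "j' mod k = j mod k" "P j'" using \<open>Q j\<close> unfolding Q_def by blast
    \<comment> \<open>\<open>(k + 1) / 2\<close> steps of size 2 advance the residue by one\<close>
    have "P (j' + 2 * ((k + 1) div 2))"
      using iterate_int_step[of P j' 2 "nat ((k + 1) div 2)"] j'(2) step assms(1) by simp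
    moreover have "2 * ((k + 1) div 2) = k + 1" using \<open>odd k\<close> by presburger
    moreover have "(j' + (k + 1)) mod k = (j + 1) mod k"
      using j'(1) by (metis add.commute add.left_commute mod_add_left_eq mod_add_self2)
    ultimately show ?thesis unfolding Q_def by auto
  qed
  moreover have "Q i" unfolding Q_def using \<open>P i\<close> by blast
  ultimately obtain j where "j mod k = l mod k" "Q j"
    using int_step_one_reaches_residue[of k Q i l] \<open>0 < k\<close> by blast
  then show ?thesis unfolding Q_def by metis
qed

lemma cotriangle_if_stability_number_gt_2:
  assumes graph: "simple_graph V E" and "2 < stability_number V E"
  shows "has_cotriangle E V"
proof -
  define sizes where "sizes = {card S |S. S \<subseteq> V \<and> is_stable E S}"
  have "finite V" using graph unfolding simple_graph_def by blast
  then have "finite sizes" unfolding sizes_def by simp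
  moreover have "card {} \<in> sizes" unfolding sizes_def is_stable_def by (intro CollectI exI[of _ "{}"]) simp
  ultimately have "Max sizes \<in> sizes" using Max_in by blast
  then obtain S where S: "S \<subseteq> V" "is_stable E S" "card S = stability_number V E"
    unfolding sizes_def stability_number_def by auto
  then obtain T where "T \<subseteq> S" "card T = 3"
    using obtain_subset_with_card_n[of 3 S] \<open>2 < stability_number V E\<close>
    by (metis Suc_leI numeral_2_eq_2 numeral_3_eq_3)
  then obtain x y z where "T = {x, y, z}" "distinct [x, y, z]" "x \<in> S" "y \<in> S" "z \<in> S"
    unfolding card_3_iff by auto
  then show ?thesis using S unfolding has_cotriangle_def is_stable_def by blast
qed

locale banner_free_odd_antihole =
  fixes V :: "'a set" and E :: "'a \<Rightarrow> 'a \<Rightarrow> bool"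
    and A :: "'a set" and k :: nat and f :: "nat \<Rightarrow> 'a"
  assumes graph: "simple_graph V E"
    and banner_free: "\<not> has_induced_banner V E"
    and odd_hole_free: "\<not> (\<exists>S. is_odd_hole V E S)"
    and A_subset: "A \<subseteq> V" and k_ge_7: "7 \<le> k" and odd_k: "odd k"
    and f_bij: "bij_betw f {..<k} A"
    and f_nonadj: "\<forall>i<k. \<forall>j<k. i \<noteq> j \<longrightarrow> (\<not> E (f i) (f j) \<longleftrightarrow> (j = Suc i mod k \<or> i = Suc j mod k))"
begin

lemma E_sym: "E x y \<Longrightarrow> E y x"
  using graph unfolding simple_graph_def by blast

lemma E_irrefl [simp]: "\<not> E x x"
  using graph unfolding simple_graph_def by blast

lemma no_induced_C5:
  assumes "v0 \<in> V" "v1 \<in> V" "v2 \<in> V" "v3 \<in> V" "v4 \<in> V" "distinct [v0, v1, v2, v3, v4]"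
    "E v0 v1" "E v1 v2" "E v2 v3" "E v3 v4" "E v4 v0"
    "\<not> E v0 v2" "\<not> E v0 v3" "\<not> E v1 v3" "\<not> E v1 v4" "\<not> E v2 v4"
  shows False
  using induced_C5_is_odd_hole[OF graph assms] odd_hole_free by blast

definition a :: "int \<Rightarrow> 'a" where
  "a i = f (nat (i mod int k))"

lemma k_pos: "0 < int k"
  using k_ge_7 by simp

lemma index_less: "nat (i mod int k) < k"
  using k_pos by (simp add: nat_less_iff)

lemma a_in [simp]: "a i \<in> A"
  unfolding a_def using bij_betw_apply[OF f_bij] index_less by simp

lemma a_in_V [simp]: "a i \<in> V"
  using a_in A_subset by blast

lemma a_eq_iff_mod: "a i = a j \<longleftrightarrow> i mod int k = j mod int k"
proof -
  have "a i = a j \<longleftrightarrow> nat (i mod int k) = nat (j mod int k)"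
    unfolding a_def using f_bij index_less unfolding bij_betw_def inj_on_def by auto
  also have "\<dots> \<longleftrightarrow> i mod int k = j mod int k"
    using k_pos by (simp add: nat_eq_iff)
  finally show ?thesis .
qed

lemma a_eq_iff: "a i = a j \<longleftrightarrow> int k dvd (i - j)"
  by (simp add: a_eq_iff_mod mod_eq_dvd_iff)

lemma A_obtain_index:
  assumes "w \<in> A"
  obtains i where "w = a i"
proof -
  obtain m where "m < k" "w = f m" using f_bij assms unfolding bij_betw_def by auto
  then have "w = a (int m)" unfolding a_def by simp
  then show ?thesis using that by blast
qed

lemma a_succ_index: "nat ((i + 1) mod int k) = Suc (nat (i mod int k)) mod k"
proof -
  have "int (Suc (nat (i mod int k)) mod k) = (i mod int k + 1) mod int k"
    using k_pos by (simp add: zmod_int add.commute)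
  also have "\<dots> = (i + 1) mod int k" by (simp add: mod_add_left_eq)
  finally show ?thesis by (metis nat_int)
qed

lemma a_nonadj_iff:
  assumes "a i \<noteq> a j"
  shows "\<not> E (a i) (a j) \<longleftrightarrow> a j = a (i + 1) \<or> a i = a (j + 1)"
proof -
  define p q where "p = nat (i mod int k)" and "q = nat (j mod int k)"
  have pq: "p < k" "q < k" "Suc p mod k < k" "Suc q mod k < k" "p \<noteq> q"
    using index_less k_pos assms unfolding p_def q_def a_def by auto
  have inj: "f u = f w \<longleftrightarrow> u = w" if "u < k" "w < k" for u w
    using f_bij that unfolding bij_betw_def inj_on_def by blast
  have "a j = a (i + 1) \<longleftrightarrow> q = Suc p mod k" "a i = a (j + 1) \<longleftrightarrow> p = Suc q mod k"
    unfolding a_def a_succ_index p_def[symmetric] q_def[symmetric] using inj pq by auto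
  moreover have "E (a i) (a j) = E (f p) (f q)" unfolding a_def p_def q_def ..
  ultimately show ?thesis using f_nonadj pq by auto
qed

lemma not_dvd_between: "0 < x \<Longrightarrow> x < int k \<Longrightarrow> \<not> int k dvd x"
  using zdvd_imp_le by fastforce

lemma not_dvd_numeral [simp]: "numeral w \<le> (6::int) \<Longrightarrow> \<not> int k dvd numeral w"
proof (rule not_dvd_between)
  assume "numeral w \<le> (6::int)"
  moreover have "(7::int) \<le> int k" using k_ge_7 by simp
  ultimately show "numeral w < int k" by linarith
qed simp

lemma not_dvd_small [simp]:
  "numeral w \<le> (6::int) \<Longrightarrow> \<not> int k dvd - numeral w" "\<not> int k dvd 1" "\<not> int k dvd -1"
  using not_dvd_numeral not_dvd_between[of 1] k_ge_7 by auto

lemma k_ne_1 [simp]: "k \<noteq> Suc 0"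
  using k_ge_7 by simp

text \<open>Normal form of adjacency inside \<open>A\<close>, in which simp decides the concrete configurations below.\<close>
lemma E_a_a_iff:
  "E (a x) (a y) \<longleftrightarrow> \<not> int k dvd (x - y) \<and> \<not> int k dvd (y - x - 1) \<and> \<not> int k dvd (x - y - 1)"
proof (cases "a x = a y")
  case True
  then have "int k dvd (x - y)" "\<not> E (a x) (a y)" using a_eq_iff E_irrefl by metis+
  then show ?thesis by simp
next
  case False
  then show ?thesis using a_nonadj_iff[OF False] by (auto simp add: a_eq_iff algebra_simps)
qed

lemmas a_simps = E_a_a_iff a_eq_iff

lemma a_ne_outside [simp]: "x \<notin> A \<Longrightarrow> a i \<noteq> x" "x \<notin> A \<Longrightarrow> x \<noteq> a i"
  using a_in by blast+

lemma E_a_outside_sym [simp]: "x \<notin> A \<Longrightarrow> E (a i) x \<longleftrightarrow> E x (a i)"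
  using E_sym by blast

lemma a_reach_step1:
  assumes "P i" "\<And>j. P j \<Longrightarrow> P (j + 1)"
  shows "\<exists>j. a j = a l \<and> P j"
  using int_step_one_reaches_residue[of "int k" P i l] assms k_pos by (auto simp: a_eq_iff_mod)

lemma a_reach_step2:
  assumes "P i" "\<And>j. P j \<Longrightarrow> P (j + 2)"
  shows "\<exists>j. a j = a l \<and> P j"
  using int_step_two_reaches_residue[of "int k" P i l] assms k_pos odd_k by (auto simp: a_eq_iff_mod)

definition attached :: "'a \<Rightarrow> bool" where
  "attached x \<longleftrightarrow> x \<in> V - A \<and> (\<exists>w\<in>A. E x w)"

lemma attached_in_V [simp]: "attached x \<Longrightarrow> x \<in> V"
  and attached_notin_A [simp]: "attached x \<Longrightarrow> x \<notin> A"
  unfolding attached_def by blast+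

lemma attached_nbr: "attached x \<Longrightarrow> \<exists>i. E x (a i)"
  unfolding attached_def using A_obtain_index by metis

lemma attachedI: "x \<in> V \<Longrightarrow> x \<notin> A \<Longrightarrow> E x (a i) \<Longrightarrow> attached x"
  unfolding attached_def using a_in by blast

lemma step2_closed_nonnbrs_absurd:
  assumes "attached x" and "P j" and "\<And>i. P i \<Longrightarrow> P (i + 2)" and "\<And>i. P i \<Longrightarrow> \<not> E x (a i)"
  shows False
proof -
  obtain l where l: "E x (a l)" using attached_nbr[OF assms(1)] by blast
  obtain i where "a i = a l" "P i" using a_reach_step2[of P j l] assms(2,3) by blast
  then show False using l assms(4) by metis
qed

lemma two_nonnbrs_propagate:
  assumes x: "x \<in> V" "x \<notin> A" and n0: "\<not> E x (a j)" and n1: "\<not> E x (a (j + 1))"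
  shows "\<not> E x (a (j + 2))"
proof
  assume e2: "E x (a (j + 2))"
  consider "E x (a (j + 3))" | "\<not> E x (a (j + 3))" "E x (a (j + 4))"
    | "\<not> E x (a (j + 3))" "\<not> E x (a (j + 4))" "E x (a (j + 5))"
    | "\<not> E x (a (j + 3))" "\<not> E x (a (j + 4))" "\<not> E x (a (j + 5))"
    by blast
  then show False
  proof cases
    case 1
    show False
      by (rule no_induced_banner[OF banner_free, of "a (j + 3)" x "a (j + 2)" "a j" "a (j + 1)"])
        (use x n0 n1 e2 1 in \<open>simp_all add: a_simps\<close>)
  next
    case 2
    show False
      by (rule no_induced_banner[OF banner_free, of "a (j + 4)" "a j" "a (j + 3)" "a (j + 1)" x])
        (use x n0 n1 e2 2 in \<open>simp_all add: a_simps\<close>)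
  next
    case 3
    show False
      by (rule no_induced_banner[OF banner_free, of "a (j + 5)" "a j" "a (j + 4)" "a (j + 1)" x])
        (use x n0 n1 e2 3 in \<open>simp_all add: a_simps\<close>)
  next
    case 4
    show False
      by (rule no_induced_banner[OF banner_free, of "a (j + 2)" "a (j + 4)" "a (j + 1)" "a (j + 5)" x])
        (use x n0 n1 e2 4 in \<open>simp_all add: a_simps\<close>)
  qed
qed

lemma nbr_after_nonnbr:
  assumes x: "attached x" and n0: "\<not> E x (a j)"
  shows "E x (a (j + 1))"
proof (rule ccontr)
  assume n1: "\<not> E x (a (j + 1))"
  define P where "P i \<longleftrightarrow> \<not> E x (a i) \<and> \<not> E x (a (i + 1))" for i
  have "P j" unfolding P_def using n0 n1 by simp
  moreover have "P (i + 1)" if "P i" for i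
    using two_nonnbrs_propagate[of x i] attached_in_V[OF x] attached_notin_A[OF x] that
    unfolding P_def by (simp add: add.assoc)
  moreover obtain l where l: "E x (a l)" using attached_nbr[OF x] by blast
  ultimately obtain i where "a i = a l" "P i" using a_reach_step1[of P j l] by blast
  then show False using l unfolding P_def by simp
qed

lemma nbr_before_nonnbr:
  assumes "attached x" and "\<not> E x (a j)"
  shows "E x (a (j - 1))"
  using nbr_after_nonnbr[OF assms(1), of "j - 1"] assms(2) by auto

lemma no_nonnbrs_three_apart:
  assumes x: "attached x" and n0: "\<not> E x (a j)" and n3: "\<not> E x (a (j + 3))"
  shows False
proof -
  have "E x (a (j + 1))" using nbr_after_nonnbr[OF x n0] .
  moreover have "E x (a (j + 2))" using nbr_before_nonnbr[OF x n3] by (simp add: add.commute)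
  ultimately show False
    by (intro no_induced_C5[of x "a (j + 1)" "a (j + 3)" "a j" "a (j + 2)"])
      (use x n0 n3 in \<open>simp_all add: a_simps\<close>)
qed

lemma consecutive_nbrs:
  assumes x: "attached x"
  obtains p where "E x (a p)" "E x (a (p + 1))"
proof -
  have "\<exists>p. E x (a p) \<and> E x (a (p + 1))"
  proof (rule ccontr)
    assume no: "\<not> ?thesis"
    then obtain q where "\<not> E x (a q)" by blast
    moreover have "\<not> E x (a (i + 2))" if "\<not> E x (a i)" for i
      using nbr_after_nonnbr[OF x that] no by (metis add.assoc one_add_one)
    ultimately show False using step2_closed_nonnbrs_absurd[OF x, of "\<lambda>i. \<not> E x (a i)" q] by blast
  qed
  then show ?thesis using that by blast
qed

lemma complete_if_nbr_of_anticomplete: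
  assumes z: "z \<in> V" "z \<notin> A" "\<And>i. \<not> E z (a i)"
    and x: "attached x" and "E z x"
  shows "E x (a q)"
proof (rule ccontr)
  assume "\<not> E x (a q)"
  moreover have "\<not> E x (a (i + 2))" if "\<not> E x (a i)" for i
  proof
    assume e2: "E x (a (i + 2))"
    have e3: "E x (a (i + 3))" using no_nonnbrs_three_apart[OF x that] by blast
    have "z \<noteq> x" using \<open>E z x\<close> by auto
    then show False
      by (intro no_induced_banner[OF banner_free, of x "a (i + 2)" "a i" "a (i + 3)" z])
        (use x z \<open>E z x\<close> that e2 e3 in \<open>simp_all add: a_simps\<close>)
  qed
  ultimately show False using step2_closed_nonnbrs_absurd[OF x, of "\<lambda>i. \<not> E x (a i)" q] by blast
qed

lemma common_nonnbr_step:
  assumes x: "attached x" and y: "attached y" and xy: "x \<noteq> y" "\<not> E x y"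
    and n0: "\<not> E x (a i)" "\<not> E y (a i)" and "\<not> E x (a (i + 2))" and "E y (a (i + 2))"
  shows False
proof (cases "E y (a (i + 3))")
  case True
  have "E x (a (i + 3))" using nbr_after_nonnbr[OF x \<open>\<not> E x (a (i + 2))\<close>] by (simp add: add.assoc)
  moreover have "\<not> E y x" using xy E_sym by blast
  ultimately show False
    by (intro no_induced_banner[OF banner_free, of "a (i + 3)" "a i" "a (i + 2)" y x])
      (use assms True in \<open>simp_all add: a_simps\<close>)
next
  case False
  then show False using no_nonnbrs_three_apart[OF y n0(2)] by blast
qed

lemma no_common_nonnbr:
  assumes x: "attached x" and y: "attached y" and xy: "x \<noteq> y" "\<not> E x y"
    and n0: "\<not> E x (a j)" "\<not> E y (a j)"
  shows False
proof -
  have yx: "\<not> E y x" using xy E_sym by blast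
  define P where "P i \<longleftrightarrow> \<not> E x (a i) \<and> \<not> E y (a i)" for i
  have "P (i + 2)" if "P i" for i
  proof -
    have "E x (a (i + 1))" "E y (a (i + 1))"
      using nbr_after_nonnbr x y that unfolding P_def by blast+
    then have "\<not> (E x (a (i + 2)) \<and> E y (a (i + 2)))"
      using no_induced_banner[OF banner_free, of "a (i + 2)" x "a (i + 1)" y "a i"]
        x y xy yx that unfolding P_def by (simp add: a_simps) blast
    then show ?thesis
      using common_nonnbr_step[OF x y xy, of i] common_nonnbr_step[OF y x xy(1)[symmetric] yx, of i]
        that unfolding P_def by blast
  qed
  then show False using step2_closed_nonnbrs_absurd[OF x, of P j] n0 unfolding P_def by blast
qed

lemma stable_triple_staggered_nonnbrs:
  assumes x: "attached x" and y: "attached y" and w: "attached w"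
    and d: "x \<noteq> y" "x \<noteq> w" "y \<noteq> w"
    and ne: "\<not> E x y" "\<not> E y x" "\<not> E x w" "\<not> E w x" "\<not> E y w" "\<not> E w y"
    and n0: "\<not> E x (a i)" and ny1: "\<not> E y (a (i + 1))" and ex2: "E x (a (i + 2))"
  shows False
proof -
  have ey0: "E y (a i)" using no_common_nonnbr[OF x y d(1) ne(1)] n0 by blast
  have ew0: "E w (a i)" using no_common_nonnbr[OF x w d(2) ne(3)] n0 by blast
  have ex1: "E x (a (i + 1))" using nbr_after_nonnbr[OF x n0] .
  have ew1: "E w (a (i + 1))" using no_common_nonnbr[OF y w d(3) ne(5)] ny1 by blast
  have ey2: "E y (a (i + 2))" using nbr_after_nonnbr[OF y ny1] by (simp add: add.assoc)
  show False
  proof (cases "E w (a (i + 2))")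
    case True
    show False
      by (rule no_induced_banner[OF banner_free, of "a (i + 2)" x "a (i + 1)" w y])
        (use assms ey0 ew0 ex1 ew1 ey2 True in \<open>simp_all add: a_simps\<close>)
  next
    case False
    show False
      by (rule no_induced_C5[of w "a (i + 1)" x "a (i + 2)" "a i"])
        (use assms ey0 ew0 ex1 ew1 ey2 False in \<open>simp_all add: a_simps\<close>)
  qed
qed

lemma stable_triple_nonnbr_step:
  assumes x: "attached x" and y: "attached y" and w: "attached w"
    and d: "x \<noteq> y" "x \<noteq> w" "y \<noteq> w" and ne: "\<not> E x y" "\<not> E x w" "\<not> E y w"
    and n0: "\<not> E x (a i)"
  shows "\<not> E x (a (i + 2))"
proof
  assume ex2: "E x (a (i + 2))"
  have ne': "\<not> E y x" "\<not> E w x" "\<not> E w y" using ne E_sym by blast+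
  have ey0: "E y (a i)" using no_common_nonnbr[OF x y d(1) ne(1)] n0 by blast
  have ew0: "E w (a i)" using no_common_nonnbr[OF x w d(2) ne(2)] n0 by blast
  have ex1: "E x (a (i + 1))" using nbr_after_nonnbr[OF x n0] .
  consider "E y (a (i + 1))" "E w (a (i + 1))" | "\<not> E y (a (i + 1))" | "\<not> E w (a (i + 1))"
    by blast
  then show False
  proof cases
    case 1
    show False
      by (rule no_induced_banner[OF banner_free, of "a (i + 1)" y "a i" w x])
        (use x y w d ne ne' n0 ey0 ew0 ex1 1 in \<open>simp_all add: a_simps\<close>)
  next
    case 2
    show False
      using stable_triple_staggered_nonnbrs[OF x y w d ne(1) ne'(1) ne(2) ne'(2) ne(3) ne'(3)] n0 ex2 2
      by blast
  next
    case 3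
    show False
      using stable_triple_staggered_nonnbrs[OF x w y d(2) d(1) d(3)[symmetric] ne(2) ne'(2) ne(1) ne'(1)
          ne'(3) ne(3)] n0 ex2 3
      by blast
  qed
qed

lemma stable_triple_complete:
  assumes "attached x" "attached y" "attached w"
    and "x \<noteq> y" "x \<noteq> w" "y \<noteq> w" and "\<not> E x y" "\<not> E x w" "\<not> E y w"
  shows "E x (a j)"
  using step2_closed_nonnbrs_absurd[OF assms(1), of "\<lambda>i. \<not> E x (a i)" j]
    stable_triple_nonnbr_step[OF assms] by blast

primrec level :: "nat \<Rightarrow> 'a set" where
  "level 0 = A"
| "level (Suc m) = level m \<union> {x. (x \<in> A \<or> attached x) \<and> (\<exists>y \<in> level m. x \<noteq> y \<and> \<not> E x y)}"

definition hull :: "'a set" where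
  "hull = (\<Union>m. level m)"

lemma level_mono: "m \<le> m' \<Longrightarrow> level m \<subseteq> level m'"
  by (induction m' rule: dec_induct) auto

lemma level_subset_Suc: "level m \<subseteq> level (Suc m)"
  by auto

lemma A_subset_level: "A \<subseteq> level m"
  using level_mono[of 0 m] by simp

lemma level_cases: "x \<in> level m \<Longrightarrow> x \<in> A \<or> attached x"
  by (induction m) auto

lemma level_subset_V: "level m \<subseteq> V"
  using level_cases A_subset attached_in_V by blast

lemma A_subset_hull: "A \<subseteq> hull"
  unfolding hull_def using A_subset_level by blast

lemma hull_subset_V: "hull \<subseteq> V"
  unfolding hull_def using level_subset_V by blast

lemma hull_cases: "x \<in> hull \<Longrightarrow> x \<in> A \<or> attached x"
  unfolding hull_def using level_cases by blast

lemma level_SucD: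
  assumes "x \<in> level (Suc m)"
  shows "\<exists>y \<in> level m. x \<noteq> y \<and> \<not> E x y"
proof (cases "x \<in> A")
  case True
  then obtain i where "x = a i" by (rule A_obtain_index)
  moreover have "a (i + 1) \<in> level m" using A_subset_level a_in by blast
  ultimately show ?thesis by (intro bexI[of _ "a (i + 1)"]) (simp_all add: a_simps)
next
  case False
  with assms show ?thesis
  proof (induction m arbitrary: x)
    case (Suc m)
    then show ?case using level_mono[of m "Suc m"] by (cases "x \<in> level (Suc m)") auto
  qed auto
qed

lemma complete_to_hull:
  assumes "v \<notin> hull" "v \<in> A \<or> attached v" "h \<in> hull"
  shows "E v h"
proof (rule ccontr)
  assume "\<not> E v h"
  obtain m where "h \<in> level m" using \<open>h \<in> hull\<close> unfolding hull_def by blast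
  then have "v \<in> level (Suc m)" using assms \<open>\<not> E v h\<close> by auto
  then show False using \<open>v \<notin> hull\<close> unfolding hull_def by blast
qed

lemma anticomplete_vertex_step:
  assumes v: "v \<in> V" "v \<notin> A" "\<And>i. \<not> E v (a i)"
    and h: "attached h" and y: "y \<in> A \<or> attached y" "h \<noteq> y" "\<not> E h y"
    and vy: "v \<noteq> y" "\<not> E v y"
  shows "\<not> E v h"
proof
  assume vh: "E v h"
  then have h_complete: "E h (a i)" for i
    using complete_if_nbr_of_anticomplete[OF v h] by blast
  then have "y \<notin> A" using y(3) by (metis A_obtain_index)
  then have "attached y" using y(1) by blast
  then obtain p where p: "E y (a p)" "E y (a (p + 1))" using consecutive_nbrs by blast
  have "v \<noteq> h" using vh by auto
  then show False
    by (intro no_induced_banner[OF banner_free, of h "a p" y "a (p + 1)" v])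
      (use v h \<open>attached y\<close> y vy vh h_complete p in \<open>simp_all add: a_simps\<close>)
qed

lemma anticomplete_to_hull:
  assumes v: "v \<in> V" "v \<notin> hull" "\<And>i. \<not> E v (a i)" and "h \<in> hull"
  shows "\<not> E v h"
proof -
  have vA: "v \<notin> A" using v(2) A_subset_hull by blast
  have "\<forall>h \<in> level m. \<not> E v h" for m
  proof (induction m)
    case 0
    show ?case using v(3) by (metis A_obtain_index level.simps(1))
  next
    case (Suc m)
    show ?case
    proof
      fix h assume h: "h \<in> level (Suc m)"
      show "\<not> E v h"
      proof (cases "h \<in> level m")
        case False
        then have "attached h" using h level_cases A_subset_level by blast
        moreover obtain y where "y \<in> level m" "h \<noteq> y" "\<not> E h y" using level_SucD[OF h] by blast
        moreover from \<open>y \<in> level m\<close> have "v \<noteq> y" using v(2) unfolding hull_def by blast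
        ultimately show ?thesis
          using anticomplete_vertex_step[OF v(1) vA v(3)] level_cases Suc.IH by blast
      qed (use Suc.IH in blast)
    qed
  qed
  then show ?thesis using \<open>h \<in> hull\<close> unfolding hull_def by blast
qed

lemma hull_module:
  assumes "v \<in> V - hull"
  shows "(\<forall>h\<in>hull. E v h) \<or> (\<forall>h\<in>hull. \<not> E v h)"
proof (cases "v \<in> A \<or> attached v")
  case True
  then show ?thesis using complete_to_hull assms by blast
next
  case False
  then have "\<not> E v (a i)" for i using assms attachedI by blast
  then show ?thesis using anticomplete_to_hull assms by blast
qed

definition hull_cotriangle :: "'a \<Rightarrow> 'a \<Rightarrow> 'a \<Rightarrow> bool" where
  "hull_cotriangle x y z \<longleftrightarrow> x \<in> hull \<and> y \<in> hull \<and> z \<in> hull \<and> distinct [x, y, z] \<and>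
     \<not> E x y \<and> \<not> E y z \<and> \<not> E x z"

lemma hull_cotriangleD:
  assumes "hull_cotriangle x y z"
  shows "x \<in> hull" "y \<in> hull" "z \<in> hull" "x \<noteq> y" "y \<noteq> z" "x \<noteq> z"
    "\<not> E x y" "\<not> E y x" "\<not> E y z" "\<not> E z y" "\<not> E x z" "\<not> E z x"
proof -
  have "x \<in> hull \<and> y \<in> hull \<and> z \<in> hull \<and> x \<noteq> y \<and> y \<noteq> z \<and> x \<noteq> z \<and>
      \<not> E x y \<and> \<not> E y z \<and> \<not> E x z"
    using assms unfolding hull_cotriangle_def by simp
  then show "x \<in> hull" "y \<in> hull" "z \<in> hull" "x \<noteq> y" "y \<noteq> z" "x \<noteq> z"
    "\<not> E x y" "\<not> E y x" "\<not> E y z" "\<not> E z y" "\<not> E x z" "\<not> E z x"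
    using E_sym by blast+
qed

lemma hull_cotriangle_swap12: "hull_cotriangle x y z \<Longrightarrow> hull_cotriangle y x z"
  and hull_cotriangle_swap23: "hull_cotriangle x y z \<Longrightarrow> hull_cotriangle x z y"
proof -
  assume "hull_cotriangle x y z"
  note c = hull_cotriangleD[OF this]
  show "hull_cotriangle y x z" "hull_cotriangle x z y"
    unfolding hull_cotriangle_def using c by simp_all
qed

lemma hull_cotriangle_attached: "hull_cotriangle x y z \<Longrightarrow> x \<notin> A \<Longrightarrow> attached x"
  using hull_cotriangleD(1) hull_cases by blast

lemma a_nonnbr_cases:
  assumes "u \<in> A" "u \<noteq> a i" "\<not> E (a i) u"
  shows "u = a (i + 1) \<or> u = a (i - 1)"
proof -
  obtain j where j: "u = a j" using assms(1) by (rule A_obtain_index)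
  then have "a j = a (i + 1) \<or> a i = a (j + 1)" using a_nonadj_iff[of i j] assms by metis
  moreover have "a i = a (j + 1) \<longleftrightarrow> a j = a (i - 1)"
    unfolding a_eq_iff by (metis dvd_minus_iff minus_diff_eq diff_diff_eq2 diff_diff_eq)
  ultimately show ?thesis using j by blast
qed

lemma hull_cotriangle_not_two_in_A:
  assumes c: "hull_cotriangle x y z" and "x \<in> A"
  shows "y \<notin> A"
proof
  assume "y \<in> A"
  obtain i where x: "x = a i" using \<open>x \<in> A\<close> by (rule A_obtain_index)
  have y: "y = a (i + 1) \<or> y = a (i - 1)"
    using a_nonnbr_cases[OF \<open>y \<in> A\<close>, of i] hull_cotriangleD[OF c] x by blast
  show False
  proof (cases "z \<in> A")
    case True
    have "z = a (i + 1) \<or> z = a (i - 1)"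
      using a_nonnbr_cases[OF True, of i] hull_cotriangleD[OF c] x by blast
    moreover have "E (a (i + 1)) (a (i - 1))" "E (a (i - 1)) (a (i + 1))" by (simp_all add: a_simps)
    ultimately show False using y hull_cotriangleD[OF c] by metis
  next
    case False
    have z: "attached z" "\<not> E z (a i)"
      using hull_cotriangle_attached[OF hull_cotriangle_swap12[OF hull_cotriangle_swap23[OF c]] False]
        hull_cotriangleD[OF c] x
      by blast+
    \<comment> \<open>\<open>z\<close> misses \<open>a i\<close>, hence sees both cyclic neighbours of \<open>a i\<close>, one of which is \<open>y\<close>\<close>
    have "\<not> E z y" using hull_cotriangleD[OF c] by blast
    then show False using y nbr_after_nonnbr[OF z] nbr_before_nonnbr[OF z] by auto
  qed
qed

lemma hull_cotriangle_avoids_A: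
  assumes c: "hull_cotriangle x y z"
  shows "x \<notin> A"
proof
  assume "x \<in> A"
  have "y \<notin> A" "z \<notin> A"
    using hull_cotriangle_not_two_in_A[OF c] hull_cotriangle_not_two_in_A[OF hull_cotriangle_swap23[OF c]] \<open>x \<in> A\<close>
    by blast+
  then have "attached y" "attached z"
    using hull_cotriangle_attached hull_cotriangle_swap12 hull_cotriangle_swap23 c by blast+
  moreover obtain i where "x = a i" using \<open>x \<in> A\<close> by (rule A_obtain_index)
  ultimately show False
    using no_common_nonnbr[of y z i] hull_cotriangleD[OF c] by blast
qed

lemma hull_cotriangle_attached_all:
  assumes "hull_cotriangle x y z"
  shows "attached x" "attached y" "attached z"
  using hull_cotriangle_attached hull_cotriangle_avoids_A hull_cotriangle_swap12
    hull_cotriangle_swap23 assms by metis+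

lemma hull_cotriangle_avoids_level_1:
  assumes c: "hull_cotriangle x y z"
  shows "x \<notin> level 1"
proof
  assume "x \<in> level 1"
  then obtain w where "w \<in> A" "\<not> E x w" using level_SucD[of x 0] by auto
  moreover obtain j where "w = a j" using \<open>w \<in> A\<close> by (rule A_obtain_index)
  moreover have "E x (a j)"
    using stable_triple_complete[OF hull_cotriangle_attached_all[OF c]] c
    unfolding hull_cotriangle_def by auto
  ultimately show False by blast
qed

lemma hull_late_vertex_adjacent:
  assumes "s \<in> hull" "s \<notin> level (Suc m)" "p \<in> level m"
  shows "E s p"
proof (rule ccontr)
  assume "\<not> E s p"
  moreover have "s \<noteq> p" using assms level_subset_Suc by blast
  ultimately have "s \<in> level (Suc m)" using hull_cases[OF \<open>s \<in> hull\<close>] \<open>p \<in> level m\<close> by auto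
  then show False using assms(2) by blast
qed

text \<open>
  A co-triangle \<open>x, y, z\<close> that first appears at level \<open>m + 2\<close> gives a banner: \<open>x\<close> has a
  non-neighbour \<open>p\<^sub>1\<close> at level \<open>m + 1\<close>, which sees \<open>y\<close> and \<open>z\<close> by minimality, and \<open>p\<^sub>1\<close> has a
  non-neighbour \<open>p\<^sub>2\<close> at level \<open>m\<close>, which sees \<open>x\<close>, \<open>y\<close> and \<open>z\<close>.
\<close>
lemma hull_cotriangle_descends:
  assumes c: "hull_cotriangle x y z" and x: "x \<in> level (Suc (Suc m))"
    and minimal: "\<And>x' y' z'. hull_cotriangle x' y' z' \<Longrightarrow> x' \<notin> level (Suc m)"
  shows False
proof -
  have late: "x \<notin> level (Suc m)" "y \<notin> level (Suc m)" "z \<notin> level (Suc m)"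
    using minimal[OF c] minimal[OF hull_cotriangle_swap12[OF c]]
      minimal[OF hull_cotriangle_swap12[OF hull_cotriangle_swap23[OF c]]] by blast+
  obtain p1 where p1: "p1 \<in> level (Suc m)" "x \<noteq> p1" "\<not> E x p1" using level_SucD[OF x] by blast
  have p1_hull: "p1 \<in> hull" using p1(1) unfolding hull_def by blast
  have "\<not> E p1 x" using p1(3) E_sym by blast
  have p1_sees: "E p1 u" if "u \<in> {y, z}" for u
  proof (rule ccontr)
    assume "\<not> E p1 u"
    moreover have "p1 \<noteq> u" "\<not> E x u" "u \<in> hull" "x \<in> hull" "x \<noteq> u"
      using that hull_cotriangleD[OF c] p1(1) late by auto
    ultimately have "hull_cotriangle p1 x u"
      unfolding hull_cotriangle_def using p1 p1_hull \<open>\<not> E p1 x\<close> by simp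
    then show False using minimal p1(1) by blast
  qed
  obtain p2 where p2: "p2 \<in> level m" "p1 \<noteq> p2" "\<not> E p1 p2" using level_SucD[OF p1(1)] by blast
  have p2_sees: "E x p2" "E y p2" "E z p2"
    using hull_late_vertex_adjacent[OF _ _ p2(1)] hull_cotriangleD[OF c] late by blast+
  have "p2 \<noteq> x" "p2 \<noteq> y" "p2 \<noteq> z" "p1 \<noteq> y" "p1 \<noteq> z"
    using late p1(1) p2(1) level_subset_Suc by auto
  moreover have "p2 \<in> V" "p1 \<in> V" "x \<in> V" "y \<in> V" "z \<in> V"
    using p1(1) p2(1) level_subset_V hull_subset_V hull_cotriangleD[OF c] by blast+
  moreover have "E p2 y" "E y p1" "E p1 z" "\<not> E p2 p1"
    using p1_sees p2_sees p2(3) E_sym by blast+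
  ultimately show False
    by (intro no_induced_banner[OF banner_free, of p2 y p1 z x])
      (use hull_cotriangleD[OF c] p1 p2 p2_sees in simp_all)
qed

lemma hull_cotriangle_free: "\<not> has_cotriangle E hull"
proof -
  have "\<forall>x y z. hull_cotriangle x y z \<longrightarrow> x \<notin> level m" for m
  proof (induction m rule: less_induct)
    case (less m)
    show ?case
    proof (cases "m \<le> 1")
      case True
      then show ?thesis using hull_cotriangle_avoids_level_1 level_mono[OF True] by blast
    next
      case False
      define m' where "m' = m - 2"
      have m: "m = Suc (Suc m')" using False unfolding m'_def by simp
      then have "\<And>x y z. hull_cotriangle x y z \<Longrightarrow> x \<notin> level (Suc m')"
        using less.IH[of "Suc m'"] m by blast
      then show ?thesis using hull_cotriangle_descends m by blast
    qed
  qed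
  show ?thesis
  proof
    assume "has_cotriangle E hull"
    then obtain x y z where c: "hull_cotriangle x y z"
      unfolding has_cotriangle_def hull_cotriangle_def by auto
    then obtain m where "x \<in> level m" using hull_cotriangleD(1) unfolding hull_def by blast
    then show False using \<open>\<And>m. \<forall>x y z. hull_cotriangle x y z \<longrightarrow> x \<notin> level m\<close> c by blast
  qed
qed

end

lemma odd_antihole_in_cotriangle_free_module:
  assumes graph: "simple_graph V E" and banner_free: "\<not> has_induced_banner V E"
    and odd_hole_free: "\<not> (\<exists>S. is_odd_hole V E S)" and antihole: "is_odd_antihole V E A"
  obtains H where "A \<subseteq> H" "H \<subseteq> V" "\<forall>v\<in>V - H. (\<forall>h\<in>H. E v h) \<or> (\<forall>h\<in>H. \<not> E v h)"
    "\<not> has_cotriangle E H"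
proof -
  obtain f k where A: "A \<subseteq> V" and bij: "bij_betw f {..<k} A"
    and nonadj: "\<forall>i<k. \<forall>j<k. i \<noteq> j \<longrightarrow> (\<not> E (f i) (f j) \<longleftrightarrow> (j = Suc i mod k \<or> i = Suc j mod k))"
    using antihole unfolding is_odd_antihole_def is_antihole_def by blast
  have "card A = k" using bij_betw_same_card[OF bij] by simp
  then have k: "7 \<le> k" "odd k"
    using odd_antihole_card_ge_7[OF graph odd_hole_free antihole] antihole
    unfolding is_odd_antihole_def by simp_all
  interpret banner_free_odd_antihole V E A k f
    using graph banner_free odd_hole_free A k bij nonadj by (rule banner_free_odd_antihole.intro)
  show ?thesis
    by (rule that[OF A_subset_hull hull_subset_V _ hull_cotriangle_free]) (use hull_module in blast)
qed

theorem theorem2: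
  fixes V :: "'a set" and E :: "'a \<Rightarrow> 'a \<Rightarrow> bool"
  assumes "simple_graph V E"
    and "\<not> has_induced_banner V E"
    and "\<not> (\<exists>S. is_odd_hole V E S)"
  shows "perfect V E \<or> stability_number V E \<le> 2 \<or>
    (\<forall>A. is_odd_antihole V E A \<longrightarrow>
       (\<exists>H. A \<subseteq> H \<and> homogeneous V E H \<and> \<not> has_cotriangle E H))"
proof -
  have "\<exists>H. A \<subseteq> H \<and> homogeneous V E H \<and> \<not> has_cotriangle E H"
    if "2 < stability_number V E" and antihole: "is_odd_antihole V E A" for A
  proof -
    obtain H where H: "A \<subseteq> H" "H \<subseteq> V" "\<forall>v\<in>V - H. (\<forall>h\<in>H. E v h) \<or> (\<forall>h\<in>H. \<not> E v h)"
      "\<not> has_cotriangle E H"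
      using odd_antihole_in_cotriangle_free_module[OF assms antihole] by blast
    have "finite V" using assms(1) unfolding simple_graph_def by blast
    have "H \<noteq> V" using H(4) cotriangle_if_stability_number_gt_2[OF assms(1) that(1)] by blast
    then have "card H < card V" using H(2) \<open>finite V\<close> by (simp add: psubset_card_mono)
    moreover have "7 \<le> card H"
      using card_mono[OF finite_subset[OF H(2) \<open>finite V\<close>] H(1)]
        odd_antihole_card_ge_7[OF assms(1,3) antihole] by simp
    ultimately have "homogeneous V E H" using H(2,3) unfolding homogeneous_def by simp
    then show ?thesis using H by blast
  qed
  then show ?thesis using not_le by blast
qed

end
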